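(* Let $a>0$, $\eta\in(0,1)$ and $f\in\mathcal C_a$, and define $f^{\pm\eta}(s)=(1\pm\frac\eta2)f\big(s/(1\pm\frac\eta2)\big)$. Then: (1) $f^{\pm\eta}\in\mathcal C_{(2\pm\eta)a/2}$; (2) $(f^{\pm\eta})'(s)=f'\big(s/(1\pm\frac\eta2)\big)$ for all $s\in\mathbb R$; (3) $f^{+\eta}-f$ and $f-f^{-\eta}$ are decreasing on $\mathbb R_{\ge0}$; (4) $f^{-\eta}(s)\le f(s)\le f^{+\eta}(s)$ for all $s\in\mathbb R$, with $f^{-\eta}(s)=f(s)$ if and only if $|s|\ge a$, and $f^{+\eta}(s)=f(s)$ if and only if $|s|\ge(2+\eta)a/2$; (5) $\|f-f^{\pm\eta}\|_\infty=\frac\eta2f(0)$.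
   Context: For $b>0$, $\mathcal C_b$ is the set of $C^1$ functions $f:\mathbb R\to\mathbb R$ that are even, satisfy $f(s)=|s|$ for $|s|\ge b$ and are strictly convex on $[-b,b]$. Statements with $\pm$ hold for both signs. *)

theory Defs
  imports "HOL-Analysis.Analysis"
begin

definition strictly_convex_on :: "real set \<Rightarrow> (real \<Rightarrow> real) \<Rightarrow> bool" where
  "strictly_convex_on S f \<longleftrightarrow>
     (\<forall>x\<in>S. \<forall>y\<in>S. \<forall>t::real. x \<noteq> y \<and> 0 < t \<and> t < 1 \<longrightarrow>
        f ((1 - t) * x + t * y) < (1 - t) * f x + t * f y)"

definition C_class :: "real \<Rightarrow> (real \<Rightarrow> real) \<Rightarrow> bool" where
  "C_class b f \<longleftrightarrow>
     (\<forall>x. f differentiable (at x)) \<and> continuous_on UNIV (deriv f) \<and>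
     (\<forall>s. f (- s) = f s) \<and>
     (\<forall>s. b \<le> \<bar>s\<bar> \<longrightarrow> f s = \<bar>s\<bar>) \<and>
     strictly_convex_on {-b..b} f"

text \<open>Dilation: dil c f s = c * f (s / c); f^{+eta} = dil (1+eta/2) f, f^{-eta} = dil (1-eta/2) f.\<close>
definition dil :: "real \<Rightarrow> (real \<Rightarrow> real) \<Rightarrow> real \<Rightarrow> real" where
  "dil c f s = c * f (s / c)"

end

theory Submission
  imports Defs
begin

text \<open>
  For \<open>f \<in> C\<^sub>a\<close> the derivative is monotone with \<open>\<bar>f'\<bar> \<le> 1\<close>, so \<open>f\<close> is convex on all of \<open>\<real>\<close>
  and \<open>f s \<ge> \<bar>s\<bar>\<close>, strictly for \<open>\<bar>s\<bar> < a\<close>. Compare two dilations \<open>c f(s/c)\<close> and \<open>d f(s/d)\<close>,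
  \<open>0 < c \<le> d\<close>. The tangent line at \<open>s/c\<close> gives a lower bound for their difference:
  \<open>d - c\<close> times the height at \<open>0\<close> of that tangent line. That height is nonnegative, and
  positive when \<open>\<bar>s/c\<bar> < a\<close>. Convexity between \<open>0\<close> and \<open>s/c\<close> gives the upper bound
  \<open>(d - c) f(0)\<close>, which is attained at \<open>s = 0\<close>. The difference has derivative
  \<open>f'(s/d) - f'(s/c) \<le> 0\<close> for \<open>s \<ge> 0\<close>. Every claim is the case \<open>c = 1\<close> or \<open>d = 1\<close> of these facts.
\<close>

lemma dil_1 [simp]: "dil 1 f = f"
  by (simp add: dil_def fun_eq_iff)

locale C_class_function =
  fixes a :: real and f :: "real \<Rightarrow> real"
  assumes pos: "0 < a" and C: "C_class a f"
begin

lemma has_deriv: "(f has_real_derivative deriv f x) (at x)"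
  using C unfolding C_class_def by (simp add: DERIV_deriv_iff_real_differentiable)

lemma continuous_on_deriv: "continuous_on S (deriv f)"
  and even: "f (- s) = f s"
  and eq_abs: "a \<le> \<bar>s\<bar> \<Longrightarrow> f s = \<bar>s\<bar>"
  and strictly_convex: "strictly_convex_on {-a..a} f"
  using C continuous_on_subset unfolding C_class_def by auto

lemma continuous_on: "continuous_on S f"
  using has_deriv DERIV_isCont continuous_at_imp_continuous_on by blast

lemma deriv_minus: "deriv f (- x) = - deriv f x"
proof -
  have "((\<lambda>y. f (- y)) has_real_derivative deriv f (- x) * (- 1)) (at x)"
    using DERIV_chain2[OF has_deriv DERIV_minus[OF DERIV_ident]] by simp
  then have "(f has_real_derivative - deriv f (- x)) (at x)"
    by (simp add: even)
  then show ?thesis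
    using has_deriv DERIV_unique by fastforce
qed

lemma deriv_eq_1:
  assumes "a \<le> x"
  shows "deriv f x = 1"
proof -
  have "deriv f y = 1" if "a < y" for y
  proof -
    have "(f has_real_derivative 1) (at y)"
      by (rule has_field_derivative_transform_within_open[OF DERIV_ident, where S = "{a<..}"])
        (use that pos eq_abs in auto)
    then show ?thesis
      by (rule DERIV_imp_deriv)
  qed
  then show ?thesis
    using continuous_constant_on_closure[of "{a<..}" "deriv f" 1 x] assms continuous_on_deriv
    by auto
qed

lemma deriv_eq_minus_1: "x \<le> -a \<Longrightarrow> deriv f x = -1"
  using deriv_eq_1[of "- x"] deriv_minus[of x] by simp

lemma convex_on_Icc: "convex_on {-a..a} f"
proof (rule convex_on_linorderI)
  fix t x y :: real
  assume "0 < t" "t < 1" "x \<in> {-a..a}" "y \<in> {-a..a}" "x < y"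
  then show "f ((1 - t) *\<^sub>R x + t *\<^sub>R y) \<le> (1 - t) * f x + t * f y"
    using strictly_convex unfolding strictly_convex_on_def by (auto intro: less_imp_le)
qed simp

lemma tangent_le_on_Icc:
  assumes "x \<in> {-a..a}" and "y \<in> {-a..a}"
  shows "f x + deriv f x * (y - x) \<le> f y"
proof -
  define g where "g z = f z + deriv f z * (y - z) - f y" for z
  have "g z \<le> 0" if "z \<in> {-a<..<a}" for z
  proof -
    have "deriv f z * (y - z) \<le> f y - f z"
      by (rule convex_on_imp_above_tangent[OF convex_on_Icc])
        (use that assms has_field_derivative_at_within[OF has_deriv] in auto)
    then show ?thesis
      by (simp add: g_def)
  qed
  moreover have "continuous_on (closure {-a<..<a}) g"
    unfolding g_def by (intro continuous_intros continuous_on continuous_on_deriv)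
  moreover have "x \<in> closure {-a<..<a}"
    using assms pos by simp
  ultimately have "g x \<le> 0"
    using continuous_le_on_closure by blast
  then show ?thesis
    by (simp add: g_def)
qed

lemma deriv_mono_on_Icc:
  assumes "x \<in> {-a..a}" and "y \<in> {-a..a}" and "x \<le> y"
  shows "deriv f x \<le> deriv f y"
proof -
  have "f x + deriv f x * (y - x) \<le> f y" "f y + deriv f y * (x - y) \<le> f x"
    using tangent_le_on_Icc assms by auto
  then have "0 \<le> (deriv f y - deriv f x) * (y - x)"
    by (simp add: algebra_simps)
  then show ?thesis
    using assms by (cases "x = y") (auto simp: zero_le_mult_iff)
qed

lemma abs_deriv_le_1: "\<bar>deriv f x\<bar> \<le> 1"
proof -
  have "deriv f (-a) \<le> deriv f x \<and> deriv f x \<le> deriv f a" if "x \<in> {-a..a}"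
    using that deriv_mono_on_Icc pos by auto
  then show ?thesis
    using deriv_eq_1[of x] deriv_eq_minus_1[of x] deriv_eq_1[of a] deriv_eq_minus_1[of "-a"]
    by (cases "x \<in> {-a..a}") auto
qed

lemma deriv_mono: "x \<le> y \<Longrightarrow> deriv f x \<le> deriv f y"
  using deriv_mono_on_Icc[of x y] deriv_eq_1[of y] deriv_eq_minus_1[of x]
    abs_deriv_le_1[of x] abs_deriv_le_1[of y]
  by (cases "x \<le> -a"; cases "a \<le> y") auto

lemma convex: "convex_on UNIV f"
  by (rule convex_on_realI[where f' = "deriv f"]) (auto intro: has_deriv deriv_mono)

lemma tangent_le: "f x + deriv f x * (y - x) \<le> f y"
  using convex_on_imp_above_tangent[OF convex, of x y "deriv f x"] has_deriv[of x] by simp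

lemma abs_le: "\<bar>x\<bar> \<le> f x"
  using tangent_le[of a x] tangent_le[of "-a" x] pos
  by (simp add: deriv_eq_1 deriv_eq_minus_1 eq_abs abs_le_iff)

lemma abs_less:
  assumes "\<bar>x\<bar> < a"
  shows "\<bar>x\<bar> < f x"
proof -
  have "y < f y" if "\<bar>y\<bar> < a" for y
  proof (rule ccontr)
    assume "\<not> y < f y"
    then have "f y = y"
      using abs_le[of y] by simp
    moreover have "f ((1 - 1/2) * y + 1/2 * a) < (1 - 1/2) * f y + 1/2 * f a"
      using strictly_convex[unfolded strictly_convex_on_def, rule_format, of y a "1/2"] that pos
      by (auto simp: abs_less_iff)
    ultimately show False
      using abs_le[of "(1 - 1/2) * y + 1/2 * a"] eq_abs[of a] pos by simp
  qed
  from this[of x] this[of "- x"] show ?thesis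
    using assms by (simp add: even abs_less_iff)
qed

lemma mult_deriv_le_abs: "t * deriv f t \<le> \<bar>t\<bar>"
proof -
  have "\<bar>t\<bar> * \<bar>deriv f t\<bar> \<le> \<bar>t\<bar>"
    by (rule mult_left_le[OF abs_deriv_le_1 abs_ge_zero])
  then show ?thesis
    using abs_ge_self[of "t * deriv f t"] by (simp add: abs_mult)
qed

text \<open>\<open>f t - t * deriv f t\<close> is the value at \<open>0\<close> of the tangent line to \<open>f\<close> at \<open>t\<close>.\<close>

lemma tangent_at_0_nonneg: "0 \<le> f t - t * deriv f t"
  using mult_deriv_le_abs[of t] abs_le[of t] by simp

lemma tangent_at_0_pos: "\<bar>t\<bar> < a \<Longrightarrow> 0 < f t - t * deriv f t"
  using mult_deriv_le_abs[of t] abs_less[of t] by simp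

lemma has_deriv_dil:
  assumes "0 < c"
  shows "(dil c f has_real_derivative deriv f (s / c)) (at s)"
proof -
  have "((\<lambda>s. c * f (s / c)) has_real_derivative c * (deriv f (s / c) * (1 / c))) (at s)"
    by (rule DERIV_cmult, rule DERIV_chain2[OF has_deriv])
      (use assms in \<open>auto intro!: derivative_eq_intros\<close>)
  then show ?thesis
    using assms by (simp add: dil_def[abs_def])
qed

lemma deriv_dil: "0 < c \<Longrightarrow> deriv (dil c f) s = deriv f (s / c)"
  by (rule DERIV_imp_deriv[OF has_deriv_dil])

lemma dil_eq_abs:
  assumes "0 < c" and "c * a \<le> \<bar>s\<bar>"
  shows "dil c f s = \<bar>s\<bar>"
proof -
  have "a \<le> \<bar>s / c\<bar>"
    using assms by (simp add: abs_divide le_divide_eq mult.commute)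
  then show ?thesis
    using assms(1) by (simp add: dil_def eq_abs abs_divide)
qed

lemma abs_less_dil:
  assumes "0 < c" and "\<bar>s\<bar> < c * a"
  shows "\<bar>s\<bar> < dil c f s"
proof -
  have "\<bar>s / c\<bar> < f (s / c)"
    using assms by (intro abs_less) (simp add: abs_divide divide_less_eq mult.commute)
  then have "c * \<bar>s / c\<bar> < c * f (s / c)"
    using assms(1) by (rule mult_strict_left_mono)
  then show ?thesis
    using assms(1) by (simp add: dil_def abs_divide)
qed

lemma C_class_dil:
  assumes "0 < c"
  shows "C_class (c * a) (dil c f)"
  unfolding C_class_def
proof (intro conjI allI impI)
  show "dil c f differentiable (at x)" for x
    using has_deriv_dil[OF assms] real_differentiable_def by blast
  have "continuous_on UNIV (\<lambda>s. deriv f (s / c))"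
    by (intro continuous_on_compose2[OF continuous_on_deriv])
      (use assms in \<open>auto intro!: continuous_intros\<close>)
  then show "continuous_on UNIV (deriv (dil c f))"
    using deriv_dil[OF assms] by simp
  show "dil c f (- s) = dil c f s" for s
    using even[of "s / c"] by (simp add: dil_def)
  show "c * a \<le> \<bar>s\<bar> \<Longrightarrow> dil c f s = \<bar>s\<bar>" for s
    by (rule dil_eq_abs[OF assms])
  show "strictly_convex_on {- (c * a)..c * a} (dil c f)"
    unfolding strictly_convex_on_def
  proof (intro ballI allI impI)
    fix x y t :: real
    assume "x \<in> {- (c * a)..c * a}" "y \<in> {- (c * a)..c * a}" "x \<noteq> y \<and> 0 < t \<and> t < 1"
    moreover have "x / c \<in> {-a..a}" and "y / c \<in> {-a..a}"
      using calculation assms by (auto simp: divide_le_eq le_divide_eq mult.commute)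
    ultimately have "f ((1 - t) * (x / c) + t * (y / c)) < (1 - t) * f (x / c) + t * f (y / c)"
      using strictly_convex[unfolded strictly_convex_on_def, rule_format, of "x / c" "y / c" t] assms
      by simp
    then have "c * f (((1 - t) * x + t * y) / c) < c * ((1 - t) * f (x / c) + t * f (y / c))"
      using assms by (simp add: add_divide_distrib)
    then show "dil c f ((1 - t) * x + t * y) < (1 - t) * dil c f x + t * dil c f y"
      by (simp add: dil_def algebra_simps)
  qed
qed

lemma dil_diff_ge:
  assumes "0 < c" and "0 < d"
  shows "(d - c) * (f (s / c) - s / c * deriv f (s / c)) \<le> dil d f s - dil c f s"
proof -
  define t where "t = s / c"
  have s: "s = c * t"
    using assms by (simp add: t_def)
  have "d * (f t + deriv f t * (s / d - t)) \<le> d * f (s / d)"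
    using tangent_le[of t "s / d"] assms by simp
  moreover have "d * (f t + deriv f t * (s / d - t)) = dil c f s + (d - c) * (f t - t * deriv f t)"
    using assms by (simp add: dil_def s field_simps)
  ultimately show ?thesis
    by (simp add: dil_def t_def)
qed

lemma dil_mono:
  assumes "0 < c" and "c \<le> d"
  shows "dil c f s \<le> dil d f s"
proof -
  have "0 \<le> (d - c) * (f (s / c) - s / c * deriv f (s / c))"
    using tangent_at_0_nonneg[of "s / c"] assms by (intro mult_nonneg_nonneg) auto
  then show ?thesis
    using dil_diff_ge[of c d s] assms by linarith
qed

lemma dil_less_dil:
  assumes "0 < c" and "c < d" and "\<bar>s\<bar> < d * a"
  shows "dil c f s < dil d f s"
proof (cases "\<bar>s\<bar> < c * a")
  case True
  then have "0 < f (s / c) - s / c * deriv f (s / c)"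
    using assms by (intro tangent_at_0_pos) (simp add: abs_divide divide_less_eq mult.commute)
  then have "0 < (d - c) * (f (s / c) - s / c * deriv f (s / c))"
    using assms by (intro mult_pos_pos) auto
  then show ?thesis
    using dil_diff_ge[of c d s] assms by linarith
next
  case False
  then show ?thesis
    using dil_eq_abs[of c s] abs_less_dil[of d s] assms by simp
qed

lemma dil_eq_dil_iff:
  assumes "0 < c" and "c < d"
  shows "dil c f s = dil d f s \<longleftrightarrow> d * a \<le> \<bar>s\<bar>"
proof
  assume "d * a \<le> \<bar>s\<bar>"
  moreover have "c * a \<le> d * a"
    using assms pos by (intro mult_right_mono) auto
  ultimately show "dil c f s = dil d f s"
    using dil_eq_abs[of c s] dil_eq_abs[of d s] assms by simp
next
  show "dil c f s = dil d f s \<Longrightarrow> d * a \<le> \<bar>s\<bar>"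
    using dil_less_dil[OF assms, of s] by (metis less_irrefl not_le)
qed

lemma dil_le_dil_add:
  assumes "0 < c" and "c \<le> d"
  shows "dil d f s \<le> dil c f s + (d - c) * f 0"
proof -
  have "f (s / d) \<le> (1 - c / d) * f 0 + c / d * f (s / c)"
    using convex_onD[OF convex, of "c / d" 0 "s / c"] assms by simp
  then have "d * f (s / d) \<le> d * ((1 - c / d) * f 0 + c / d * f (s / c))"
    using assms by simp
  then show ?thesis
    using assms by (simp add: dil_def algebra_simps)
qed

lemma antimono_dil_diff:
  assumes "0 < c" and "c \<le> d"
  shows "antimono_on {0..} (\<lambda>s. dil d f s - dil c f s)"
  unfolding monotone_on_def
proof (intro ballI impI)
  fix x y :: real
  assume "x \<in> {0..}" "y \<in> {0..}" "x \<le> y"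
  show "dil d f y - dil c f y \<le> dil d f x - dil c f x"
  proof (rule DERIV_nonpos_imp_nonincreasing[OF \<open>x \<le> y\<close>])
    fix z assume "x \<le> z" "z \<le> y"
    have "((\<lambda>s. dil d f s - dil c f s) has_real_derivative deriv f (z / d) - deriv f (z / c)) (at z)"
      using assms by (intro DERIV_diff has_deriv_dil) auto
    moreover have "z / d \<le> z / c"
      using assms \<open>x \<in> {0..}\<close> \<open>x \<le> z\<close> by (intro divide_left_mono) auto
    ultimately show "\<exists>D. ((\<lambda>s. dil d f s - dil c f s) has_real_derivative D) (at z) \<and> D \<le> 0"
      using deriv_mono[of "z / d" "z / c"] by auto
  qed
qed

lemma SUP_abs_dil_diff:
  assumes "0 < c" and "c \<le> d"
  shows "(SUP s. \<bar>dil c f s - dil d f s\<bar>) = (d - c) * f 0"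
proof (rule cSup_eq_maximum)
  have "\<bar>dil c f 0 - dil d f 0\<bar> = (d - c) * f 0"
    using dil_mono[OF assms, of 0] unfolding dil_def by (simp add: abs_if left_diff_distrib)
  then show "(d - c) * f 0 \<in> range (\<lambda>s. \<bar>dil c f s - dil d f s\<bar>)"
    by (intro range_eqI[where x = 0]) simp
next
  fix y
  assume "y \<in> range (\<lambda>s. \<bar>dil c f s - dil d f s\<bar>)"
  then obtain s where "y = \<bar>dil c f s - dil d f s\<bar>"
    by blast
  moreover have "dil c f s \<le> dil d f s" and "dil d f s \<le> dil c f s + (d - c) * f 0"
    using dil_mono[OF assms] dil_le_dil_add[OF assms] by auto
  ultimately show "y \<le> (d - c) * f 0"
    by simp
qed

end

theorem lemma3p4:
  fixes a \<eta> :: real and f :: "real \<Rightarrow> real"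
  assumes "a > 0" and "0 < \<eta>" and "\<eta> < 1" and "C_class a f"
  defines "fp \<equiv> dil (1 + \<eta> / 2) f" and "fm \<equiv> dil (1 - \<eta> / 2) f"
  shows "(C_class ((2 + \<eta>) * a / 2) fp \<and> C_class ((2 - \<eta>) * a / 2) fm) \<and>
         (\<forall>s. deriv fp s = deriv f (s / (1 + \<eta> / 2))) \<and>
         (\<forall>s. deriv fm s = deriv f (s / (1 - \<eta> / 2))) \<and>
         antimono_on {0::real..} (\<lambda>s. fp s - f s) \<and>
         antimono_on {0::real..} (\<lambda>s. f s - fm s) \<and>
         (\<forall>s. fm s \<le> f s \<and> f s \<le> fp s) \<and>
         (\<forall>s. fm s = f s \<longleftrightarrow> \<bar>s\<bar> \<ge> a) \<and>
         (\<forall>s. fp s = f s \<longleftrightarrow> \<bar>s\<bar> \<ge> (2 + \<eta>) * a / 2) \<and>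
         (SUP s. \<bar>f s - fp s\<bar>) = \<eta> / 2 * f 0 \<and>
         (SUP s. \<bar>f s - fm s\<bar>) = \<eta> / 2 * f 0"
proof -
  interpret C_class_function a f
    using assms(1,4) by unfold_locales
  define p m where "p = 1 + \<eta> / 2" and "m = 1 - \<eta> / 2"
  have pm: "1 < p" "0 < m" "m < 1" "p - 1 = \<eta> / 2" "1 - m = \<eta> / 2"
    using assms(2,3) by (simp_all add: p_def m_def)
  have scale: "(2 + \<eta>) * a / 2 = p * a" "(2 - \<eta>) * a / 2 = m * a"
    by (simp_all add: p_def m_def field_simps)
  have "C_class (p * a) (dil p f)" and "C_class (m * a) (dil m f)"
    using pm by (simp_all add: C_class_dil)
  moreover have "deriv (dil p f) s = deriv f (s / p)" and "deriv (dil m f) s = deriv f (s / m)" for s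
    using pm by (simp_all add: deriv_dil)
  moreover have "antimono_on {0..} (\<lambda>s. dil p f s - f s)" and "antimono_on {0..} (\<lambda>s. f s - dil m f s)"
    using antimono_dil_diff[of 1 p] antimono_dil_diff[of m 1] pm by simp_all
  moreover have "dil m f s \<le> f s \<and> f s \<le> dil p f s" for s
    using dil_mono[of m 1 s] dil_mono[of 1 p s] pm by simp
  moreover have "dil m f s = f s \<longleftrightarrow> a \<le> \<bar>s\<bar>" for s
    using dil_eq_dil_iff[of m 1 s] pm by simp
  moreover have "dil p f s = f s \<longleftrightarrow> p * a \<le> \<bar>s\<bar>" for s
    using dil_eq_dil_iff[of 1 p s] pm by (simp add: eq_commute[of "f s"])
  moreover have "(SUP s. \<bar>f s - dil p f s\<bar>) = \<eta> / 2 * f 0"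
    using SUP_abs_dil_diff[of 1 p] pm by simp
  moreover have "(SUP s. \<bar>f s - dil m f s\<bar>) = \<eta> / 2 * f 0"
    using SUP_abs_dil_diff[of m 1] pm by (simp add: abs_minus_commute)
  ultimately show ?thesis
    unfolding fp_def fm_def p_def[symmetric] m_def[symmetric] scale by blast
qed

end
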